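(* Let $(\lambda,\vartheta,\zeta_0)$ be fluid model data as in the context, let $\zeta(\cdot)$ be a measure valued fluid model solution with total mass $z(\cdot)$, and let $t_0>0$. Define $z(t_0,t)=z(t_0+t)$ and $S(t_0,u,v)=\int_u^v z(t_0,r)^{-1}dr$. Then for all $t\ge0$, $$z(t_0,t)=\zeta(t_0)\big([S(t_0,0,t),\infty]\times[t,\infty]\big)+\lambda\int_0^t\mathbf P\big(B\ge S(t_0,s,t);\,D\ge t-s\big)ds.$$
   Context: $\overline{\mathbb R}_+=[0,\infty]$; $\mathbf M_1$ the finite nonnegative Borel measures on $\overline{\mathbb R}_+^2$ with the weak topology. Fluid model data: $\lambda>0$; $\vartheta$ a Borel probability measure on $\overline{\mathbb R}_+^2$ with $\vartheta(\{0\}\times\overline{\mathbb R}_+)=\vartheta(\overline{\mathbb R}_+\times\{0\})=\vartheta(\{(\infty,\infty)\})=0$, $(B,D)$ a random pair with law $\vartheta$, $\rho=\lambda\mathbf E[B]>1$; $\zeta_0\in\mathbf M_1$ with marginals free of atoms in $[0,\infty)$. Corner sets $\mathcal C=\{[x,\infty)\times[y,\infty):x,y\in[0,\infty)\}\cup\{[x,\infty]\times[y,\infty]:x,y\in\overline{\mathbb R}_+\}$. A measure valued fluid model solution is a continuous $\zeta:[0,\infty)\to\mathbf M_1$ with total mass $z(t)=\zeta(t)(\overline{\mathbb R}_+^2)$, $S(u,v)=\int_u^vz(s)^{-1}ds$, such that $\inf_{t>a}z(t)>0$ for all $a>0$ and $\zeta(t)(C)=\zeta_0(C+(S(0,t),t))+\lambda\int_0^t\vartheta(C+(S(s,t),t-s))ds$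 for all $C\in\mathcal C$, $t\ge0$ ($A+w=\{a+w:a\in A\}$). *)

theory Defs
  imports "HOL-Analysis.Analysis" "HOL-Probability.Probability"
begin

text \<open>The state space [0,\<infinity>]^2 is modelled as ennreal \<times> ennreal with its Borel sets.\<close>

type_synonym pt = "ennreal \<times> ennreal"

definition M1 :: "pt measure \<Rightarrow> bool" where
  "M1 \<mu> \<longleftrightarrow> sets \<mu> = sets (borel :: pt measure) \<and> finite_measure \<mu>"

definition corner_sets :: "pt set set" where
  "corner_sets =
     {{p. ennreal x \<le> fst p \<and> fst p < \<infinity> \<and> ennreal y \<le> snd p \<and> snd p < \<infinity>} | x y. x \<ge> 0 \<and> y \<ge> 0}
   \<union> {{x..} \<times> {y..} | x y :: ennreal. True}"

definition shift :: "pt set \<Rightarrow> pt \<Rightarrow> pt set" (infixl "\<oplus>\<^sub>s" 65) where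
  "A \<oplus>\<^sub>s w = (\<lambda>a. (fst a + fst w, snd a + snd w)) ` A"

definition mass :: "(real \<Rightarrow> pt measure) \<Rightarrow> real \<Rightarrow> real" where
  "mass \<zeta> t = measure (\<zeta> t) UNIV"

text \<open>S(u,v) = \<integral>_u^v z(s)^{-1} ds, valued in [0,\<infinity>] (1/0 read as \<infinity>).\<close>
definition Sint :: "(real \<Rightarrow> real) \<Rightarrow> real \<Rightarrow> real \<Rightarrow> ennreal" where
  "Sint z u v = (\<integral>\<^sup>+ r. indicator {u..v} r * inverse (ennreal (z r)) \<partial>lborel)"

text \<open>Continuity into M_1 with the weak topology: integrals of bounded continuous
  functions depend continuously on t.\<close>
definition weakly_continuous_on :: "real set \<Rightarrow> (real \<Rightarrow> pt measure) \<Rightarrow> bool" where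
  "weakly_continuous_on T \<zeta> \<longleftrightarrow>
     (\<forall>f :: pt \<Rightarrow> real. continuous_on UNIV f \<and> bounded (range f) \<longrightarrow>
        continuous_on T (\<lambda>t. integral\<^sup>L (\<zeta> t) f))"

definition fluid_model_data :: "real \<Rightarrow> pt measure \<Rightarrow> pt measure \<Rightarrow> bool" where
  "fluid_model_data lam th \<zeta>0 \<longleftrightarrow>
     lam > 0 \<and>
     prob_space th \<and> sets th = sets (borel :: pt measure) \<and>
     emeasure th ({0} \<times> UNIV) = 0 \<and> emeasure th (UNIV \<times> {0}) = 0 \<and>
     emeasure th {(\<infinity>, \<infinity>)} = 0 \<and>
     ennreal lam * (\<integral>\<^sup>+ p. fst p \<partial>th) > 1 \<and>
     M1 \<zeta>0 \<and>
     (\<forall>x::ennreal. x < \<infinity> \<longrightarrow> emeasure \<zeta>0 ({x} \<times> UNIV) = 0 \<and> emeasure \<zeta>0 (UNIV \<times> {x}) = 0)"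

definition fluid_model_solution ::
    "real \<Rightarrow> pt measure \<Rightarrow> pt measure \<Rightarrow> (real \<Rightarrow> pt measure) \<Rightarrow> bool" where
  "fluid_model_solution lam th \<zeta>0 \<zeta> \<longleftrightarrow>
     (\<forall>t\<ge>0. M1 (\<zeta> t)) \<and>
     weakly_continuous_on {0..} \<zeta> \<and>
     (\<forall>a>0. \<exists>c>0. \<forall>t>a. mass \<zeta> t \<ge> c) \<and>
     (\<forall>C\<in>corner_sets. \<forall>t\<ge>0.
        measure (\<zeta> t) C =
          measure \<zeta>0 (C \<oplus>\<^sub>s (Sint (mass \<zeta>) 0 t, ennreal t))
          + lam * (LBINT s:{0..t}. measure th (C \<oplus>\<^sub>s (Sint (mass \<zeta>) s t, ennreal (t - s)))))"

end

theory Submission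
  imports Defs
begin

text \<open>Applying the fluid equation at time t0 + t to the whole space writes z(t0 + t) as the
  surviving initial mass plus \<lambda> times the integral over [0, t0 + t] of the probability that a job
  arriving at s is still present at t0 + t. Applying it at time t0 to the corner
  [S(t0, t0 + t), \<infinity>] \<times> [t, \<infinity>] gives, by additivity S(s, t0) + S(t0, t0 + t) = S(s, t0 + t),
  the same initial term plus the part of that integral over [0, t0]. The difference is the
  integral over [t0, t0 + t], which becomes the claimed one after translating time by t0.\<close>

lemma image_add_right_atLeast_ennreal: "(\<lambda>u. u + a) ` {x..} = {x + (a::ennreal)..}"
proof (intro set_eqI iffI)
  fix b assume "b \<in> (\<lambda>u. u + a) ` {x..}"
  then show "b \<in> {x + a..}" by (auto intro: add_right_mono)
next
  fix b assume b: "b \<in> {x + a..}"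
  show "b \<in> (\<lambda>u. u + a) ` {x..}"
  proof (cases "a = \<infinity>")
    case True
    then have "b = \<infinity>" using b by (simp add: top_unique)
    then show ?thesis using True by (auto intro!: image_eqI[of _ _ x])
  next
    case False
    have "a \<le> b" using b by (auto intro: order_trans[OF add_increasing])
    then have "b = (b - a) + a" using False by (simp add: diff_add_cancel_ennreal)
    moreover have "x \<le> b - a" using b False by (simp add: ennreal_le_minus_iff)
    ultimately show ?thesis by blast
  qed
qed

lemma shift_Times_atLeast: "({x..} \<times> {y..}) \<oplus>\<^sub>s (a, b) = {x + a..} \<times> {y + b..}"
proof -
  have "({x..} \<times> {y..}) \<oplus>\<^sub>s (a, b) = ((\<lambda>u. u + a) ` {x..}) \<times> ((\<lambda>u. u + b) ` {y..})"
    unfolding shift_def by (auto simp: image_iff)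
  then show ?thesis by (simp add: image_add_right_atLeast_ennreal)
qed

lemma Times_atLeast_in_corner_sets: "{x..} \<times> {y..} \<in> corner_sets"
  unfolding corner_sets_def by blast

lemma Times_atLeast_in_sets_borel: "{x..} \<times> {y..} \<in> sets (borel :: pt measure)"
  by (intro borel_closed closed_Times closed_atLeast)

lemma Sint_antimono: "s \<le> s' \<Longrightarrow> Sint z s' v \<le> Sint z s v"
  unfolding Sint_def by (intro nn_integral_mono) (auto simp: indicator_def)

text \<open>Continuity is only assumed on [u, v]: the total mass of a fluid model solution is
  unconstrained at negative times, so it need not be measurable on all of \<real>.\<close>

lemma Sint_integrand_measurable:
  fixes z :: "real \<Rightarrow> real"
  assumes "continuous_on {u..v} z"
  shows "(\<lambda>r. indicator {u..v} r * inverse (ennreal (z r))) \<in> borel_measurable borel"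
proof -
  define g where "g r = indicator {u..v} r *\<^sub>R z r" for r
  have [measurable]: "g \<in> borel_measurable borel"
    unfolding g_def using assms by (intro borel_measurable_continuous_on_indicator) simp_all
  have "(\<lambda>r. indicator {u..v} r * inverse (ennreal (z r)))
      = (\<lambda>r. indicator {u..v} r * inverse (ennreal (g r)))"
    by (auto simp: g_def indicator_def)
  also have "\<dots> \<in> borel_measurable borel" by measurable
  finally show ?thesis .
qed

lemma Sint_add:
  assumes "continuous_on {s..v} z" and "s \<le> m" "m \<le> v"
  shows "Sint z s m + Sint z m v = Sint z s v"
proof -
  have [measurable]: "(\<lambda>r. indicator {s..m} r * inverse (ennreal (z r))) \<in> borel_measurable borel"
      "(\<lambda>r. indicator {m..v} r * inverse (ennreal (z r))) \<in> borel_measurable borel"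
    using assms by (auto intro!: Sint_integrand_measurable elim: continuous_on_subset)
  have "Sint z s m + Sint z m v = (\<integral>\<^sup>+ r. indicator {s..m} r * inverse (ennreal (z r))
      + indicator {m..v} r * inverse (ennreal (z r)) \<partial>lborel)"
    unfolding Sint_def by (rule nn_integral_add[symmetric]) auto
  also have "\<dots> = Sint z s v"
    unfolding Sint_def
    by (rule nn_integral_cong_AE)
      (use AE_lborel_singleton[of m] assms in \<open>auto simp: indicator_def elim!: eventually_mono\<close>)
  finally show ?thesis .
qed

lemma Sint_translate:
  assumes "continuous_on {c + u..c + v} z"
  shows "Sint (\<lambda>r. z (c + r)) u v = Sint z (c + u) (c + v)"
proof -
  have "Sint z (c + u) (c + v)
      = (\<integral>\<^sup>+x. indicator {c + u..c + v} (c + x) * inverse (ennreal (z (c + x))) \<partial>lborel)"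
    unfolding Sint_def
    using nn_integral_real_affine[OF Sint_integrand_measurable[OF assms], of 1 c] by simp
  also have "\<dots> = Sint (\<lambda>r. z (c + r)) u v"
    unfolding Sint_def by (intro nn_integral_cong) (auto simp: indicator_def)
  finally show ?thesis ..
qed

lemma set_integral_Icc_split:
  fixes f :: "real \<Rightarrow> 'a :: {banach, second_countable_topology}"
  assumes "a \<le> b" "b \<le> c" and "set_integrable lborel {a..c} f"
  shows "(LBINT s:{a..c}. f s) = (LBINT s:{a..b}. f s) + (LBINT s:{b..c}. f s)"
proof -
  have "{a..c} = {a..b} \<union> {b..c}" using assms by auto
  moreover have "(LBINT s:{a..b} \<union> {b..c}. f s) = (LBINT s:{a..b}. f s) + (LBINT s:{b..c}. f s)"
    using assms AE_lborel_singleton[of b]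
    by (intro set_integral_Un_AE) (auto elim: eventually_mono set_integrable_subset)
  ultimately show ?thesis by simp
qed

lemma set_integral_Icc_translate:
  fixes f :: "real \<Rightarrow> 'a :: {banach, second_countable_topology}"
  shows "(LBINT s:{a..b}. f (c + s)) = (LBINT s:{c + a..c + b}. f s)"
proof -
  have "indicator {c + a..c + b} (c + s) = (indicator {a..b} s :: real)" for s
    by (auto simp: indicator_def)
  then show ?thesis
    using lborel_integral_real_affine[of 1 "\<lambda>s. indicator {c + a..c + b} s *\<^sub>R f s" c]
    by (simp add: set_lebesgue_integral_def)
qed

text \<open>P(B \<ge> S(s, t), D \<ge> t - s): the fraction of the jobs arriving at time s that are still
  in the system at time t.\<close>

definition present_prob :: "pt measure \<Rightarrow> (real \<Rightarrow> real) \<Rightarrow> real \<Rightarrow> real \<Rightarrow> real" where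
  "present_prob th z s t = measure th ({Sint z s t..} \<times> {ennreal (t - s)..})"

lemma present_prob_mono:
  assumes "finite_measure th" "sets th = sets borel"
  shows "mono (\<lambda>s. present_prob th z s t)"
proof (rule monoI)
  fix s s' :: real assume "s \<le> s'"
  then have "{Sint z s t..} \<times> {ennreal (t - s)..} \<subseteq> {Sint z s' t..} \<times> {ennreal (t - s')..}"
    using Sint_antimono[of s s' z t] ennreal_leI[of "t - s'" "t - s"] by (auto intro: order_trans)
  then show "present_prob th z s t \<le> present_prob th z s' t"
    unfolding present_prob_def using assms
    by (intro finite_measure.finite_measure_mono) (auto simp: Times_atLeast_in_sets_borel)
qed

lemma set_integrable_present_prob:
  assumes "prob_space th" "sets th = sets borel"
  shows "set_integrable lborel {a..b} (\<lambda>s. present_prob th z s t)"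
proof -
  have [measurable]: "(\<lambda>s. present_prob th z s t) \<in> borel_measurable borel"
    using assms by (intro borel_measurable_mono present_prob_mono prob_space.finite_measure)
  have "norm (present_prob th z s t) \<le> 1" for s
    unfolding present_prob_def using prob_space.prob_le_1[OF assms(1)] by simp
  then show ?thesis
    unfolding set_integrable_def
    by (intro integrableI_bounded_set_indicator[where B=1]) (auto simp: emeasure_lborel_Icc_eq)
qed

lemma present_prob_translate:
  assumes "continuous_on {c + s..c + t} z"
  shows "present_prob th (\<lambda>r. z (c + r)) s t = present_prob th z (c + s) (c + t)"
  unfolding present_prob_def Sint_translate[OF assms] by simp

lemma weakly_continuous_on_mass:
  assumes "weakly_continuous_on T \<zeta>" and "\<And>t. t \<in> T \<Longrightarrow> sets (\<zeta> t) = sets borel"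
  shows "continuous_on T (mass \<zeta>)"
proof -
  have "continuous_on UNIV (\<lambda>_::pt. 1::real) \<and> bounded (range (\<lambda>_::pt. 1::real))"
    by simp
  then have "continuous_on T (\<lambda>t. integral\<^sup>L (\<zeta> t) (\<lambda>_::pt. 1::real))"
    using assms(1) unfolding weakly_continuous_on_def by blast
  moreover have "integral\<^sup>L (\<zeta> t) (\<lambda>_. 1::real) = mass \<zeta> t" if "t \<in> T" for t
    using sets_eq_imp_space_eq[OF assms(2)[OF that]] by (simp add: mass_def)
  ultimately show ?thesis by (simp cong: continuous_on_cong)
qed

lemma fluid_model_solution_mass_continuous:
  "fluid_model_solution lam th \<zeta>0 \<zeta> \<Longrightarrow> continuous_on {0..} (mass \<zeta>)"
  unfolding fluid_model_solution_def M1_def by (auto intro: weakly_continuous_on_mass)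

lemma fluid_model_solution_corner:
  assumes "fluid_model_solution lam th \<zeta>0 \<zeta>" and "0 \<le> t"
  shows "measure (\<zeta> t) ({x..} \<times> {y..}) =
      measure \<zeta>0 ({x + Sint (mass \<zeta>) 0 t..} \<times> {y + ennreal t..})
      + lam * (LBINT s:{0..t}. measure th ({x + Sint (mass \<zeta>) s t..} \<times> {y + ennreal (t - s)..}))"
proof -
  have "\<forall>C\<in>corner_sets. \<forall>t\<ge>0. measure (\<zeta> t) C =
      measure \<zeta>0 (C \<oplus>\<^sub>s (Sint (mass \<zeta>) 0 t, ennreal t))
      + lam * (LBINT s:{0..t}. measure th (C \<oplus>\<^sub>s (Sint (mass \<zeta>) s t, ennreal (t - s))))"
    using assms(1) unfolding fluid_model_solution_def by (elim conjE)
  from this[rule_format, OF Times_atLeast_in_corner_sets assms(2)] show ?thesis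
    unfolding shift_Times_atLeast .
qed

lemma fluid_model_solution_mass:
  assumes "fluid_model_solution lam th \<zeta>0 \<zeta>" and "0 \<le> t"
  shows "mass \<zeta> t = measure \<zeta>0 ({Sint (mass \<zeta>) 0 t..} \<times> {ennreal t..})
      + lam * (LBINT s:{0..t}. present_prob th (mass \<zeta>) s t)"
proof -
  have "{0::ennreal..} = UNIV" by auto
  then show ?thesis
    using fluid_model_solution_corner[OF assms, of 0 0] by (simp add: mass_def present_prob_def)
qed

lemma fluid_model_solution_restart:
  assumes sol: "fluid_model_solution lam th \<zeta>0 \<zeta>" and "0 \<le> t0" "0 \<le> t"
  shows "measure (\<zeta> t0) ({Sint (mass \<zeta>) t0 (t0 + t)..} \<times> {ennreal t..}) =
      measure \<zeta>0 ({Sint (mass \<zeta>) 0 (t0 + t)..} \<times> {ennreal (t0 + t)..})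
      + lam * (LBINT s:{0..t0}. present_prob th (mass \<zeta>) s (t0 + t))"
proof -
  let ?S = "Sint (mass \<zeta>)"
  have S_add: "?S t0 (t0 + t) + ?S s t0 = ?S s (t0 + t)" if "0 \<le> s" "s \<le> t0" for s
    using Sint_add[of s "t0 + t" "mass \<zeta>" t0] that assms
      continuous_on_subset[OF fluid_model_solution_mass_continuous[OF sol]]
    by (simp add: add.commute subset_eq)
  have t_add: "ennreal t + ennreal (t0 - s) = ennreal (t0 + t - s)" if "s \<le> t0" for s
    using that assms by (simp flip: ennreal_plus)
  have "(LBINT s:{0..t0}. measure th ({?S t0 (t0 + t) + ?S s t0..} \<times> {ennreal t + ennreal (t0 - s)..}))
      = (LBINT s:{0..t0}. present_prob th (mass \<zeta>) s (t0 + t))"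
    by (rule set_lebesgue_integral_cong) (auto simp: S_add t_add present_prob_def)
  then show ?thesis
    using fluid_model_solution_corner[OF sol \<open>0 \<le> t0\<close>, of "?S t0 (t0 + t)" "ennreal t"]
      S_add[of 0] t_add[of 0] assms by (simp add: add.commute[of "ennreal t"])
qed

theorem mainTheorem4:
  fixes lam :: real and th \<zeta>0 :: "pt measure" and \<zeta> :: "real \<Rightarrow> pt measure" and t0 :: real
  assumes "fluid_model_data lam th \<zeta>0"
    and "fluid_model_solution lam th \<zeta>0 \<zeta>"
    and "t0 > 0"
  shows "\<forall>t\<ge>0.
    mass \<zeta> (t0 + t) =
      measure (\<zeta> t0) ({Sint (\<lambda>r. mass \<zeta> (t0 + r)) 0 t..} \<times> {ennreal t..})
      + lam * (LBINT s:{0..t}.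
          measure th ({Sint (\<lambda>r. mass \<zeta> (t0 + r)) s t..} \<times> {ennreal (t - s)..}))"
proof (intro allI impI)
  fix t :: real assume "0 \<le> t"
  let ?z = "mass \<zeta>"
  let ?p = "\<lambda>s. present_prob th ?z s (t0 + t)"
  have "prob_space th" "sets th = sets borel"
    using assms(1) unfolding fluid_model_data_def by auto
  then have split: "(LBINT s:{0..t0 + t}. ?p s) = (LBINT s:{0..t0}. ?p s) + (LBINT s:{t0..t0 + t}. ?p s)"
    using assms(3) \<open>0 \<le> t\<close> by (intro set_integral_Icc_split set_integrable_present_prob) auto
  have cont: "continuous_on {t0 + a..t0 + b} ?z" if "0 \<le> a" for a b
    by (rule continuous_on_subset[OF fluid_model_solution_mass_continuous[OF assms(2)]])
      (use assms(3) that in auto)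
  have "(LBINT s:{t0..t0 + t}. ?p s) = (LBINT s:{0..t}. ?p (t0 + s))"
    using set_integral_Icc_translate[of 0 t ?p t0] by simp
  also have "\<dots> = (LBINT s:{0..t}. present_prob th (\<lambda>r. ?z (t0 + r)) s t)"
    using cont by (intro set_lebesgue_integral_cong) (auto simp: present_prob_translate)
  finally have "?z (t0 + t) = measure (\<zeta> t0) ({Sint ?z t0 (t0 + t)..} \<times> {ennreal t..})
      + lam * (LBINT s:{0..t}. present_prob th (\<lambda>r. ?z (t0 + r)) s t)"
    using fluid_model_solution_mass[OF assms(2), of "t0 + t"]
      fluid_model_solution_restart[OF assms(2), of t0 t] assms(3) \<open>0 \<le> t\<close>
    by (simp add: split distrib_left)
  then show "?z (t0 + t) = measure (\<zeta> t0) ({Sint (\<lambda>r. ?z (t0 + r)) 0 t..} \<times> {ennreal t..})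
      + lam * (LBINT s:{0..t}. measure th ({Sint (\<lambda>r. ?z (t0 + r)) s t..} \<times> {ennreal (t - s)..}))"
    using Sint_translate[OF cont, of 0 t] by (simp add: present_prob_def)
qed

end
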